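(* For real numbers $\ell_1,\ell_2>0$, the topology of $\mathcal{G}(\ell_1,\ell_2)$ is the compact-open topology. In particular it is metrizable. A sequence $(\phi_n)_{n\ge0}$ of $\mathcal{G}(\ell_1,\ell_2)$ converges to $\phi\in\mathcal{G}(\ell_1,\ell_2)$ if and only if it converges pointwise.
   Context: Work in $\mathbf{Top}$, the category of $\Delta$-generated spaces (or $\Delta$-Hausdorff $\Delta$-generated spaces), cartesian closed with internal hom ${\rm TOP}(X,Y)$ = set of continuous maps with the $\Delta$-kelleyfication of the compact-open topology ($\Delta$-kelleyfication: the right adjoint of the inclusion of $\Delta$-generated spaces into all topological spaces; it keeps the underlying set). $\mathcal{G}(\ell_1,\ell_2)$ is the set of nondecreasing homeomorphisms $[0,\ell_1]\to[0,\ell_2]$ equipped with the $\Delta$-kelleyfication of the relative topology induced by the inclusion into ${\rm TOP}([0,\ell_1],[0,\ell_2])$. *)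

theory Defs
  imports "HOL-Analysis.Analysis" "HOL-Homology.Simplices"
begin

text \<open>Maps are
represented extensionally (value undefined outside topspace X), so that a
continuous map corresponds to exactly one HOL function.  The subbasis consists of
the sets {f. f ` K \<subseteq> U}, K compact in X, U open in Y (taking K empty gives the
whole carrier).\<close>
definition cmaps :: "'a topology \<Rightarrow> 'b topology \<Rightarrow> ('a \<Rightarrow> 'b) set" where
  "cmaps X Y = {f. continuous_map X Y f \<and> f \<in> extensional (topspace X)}"

definition compact_open :: "'a topology \<Rightarrow> 'b topology \<Rightarrow> ('a \<Rightarrow> 'b) topology" where
  "compact_open X Y = topology_generated_by
     {{f \<in> cmaps X Y. f ` K \<subseteq> U} | K U. compactin X K \<and> openin Y U}"

definition delta_kelleyfication :: "'a topology \<Rightarrow> 'a topology" where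
  "delta_kelleyfication X = topology (\<lambda>U. U \<subseteq> topspace X \<and>
     (\<forall>n \<sigma>. continuous_map (subtopology (powertop_real UNIV) (standard_simplex n)) X \<sigma> \<longrightarrow>
        openin (subtopology (powertop_real UNIV) (standard_simplex n))
               {x \<in> standard_simplex n. \<sigma> x \<in> U}))"

definition TOP :: "'a topology \<Rightarrow> 'b topology \<Rightarrow> ('a \<Rightarrow> 'b) topology" where
  "TOP X Y = delta_kelleyfication (compact_open X Y)"

definition Gset :: "real \<Rightarrow> real \<Rightarrow> (real \<Rightarrow> real) set" where
  "Gset l1 l2 = {f. f \<in> extensional {0..l1} \<and>
      homeomorphic_map (top_of_set {0..l1}) (top_of_set {0..l2}) f \<and> mono_on {0..l1} f}"

definition Gtop :: "real \<Rightarrow> real \<Rightarrow> (real \<Rightarrow> real) topology" where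
  "Gtop l1 l2 = delta_kelleyfication
      (subtopology (TOP (top_of_set {0..l1}) (top_of_set {0..l2})) (Gset l1 l2))"

end

theory Submission
  imports Defs
begin

text \<open>On \<open>G(l1, l2)\<close> the compact-open topology is the topology of the sup metric: a
  compact-open neighbourhood constrains a map uniformly on a compact set, and conversely,
  because the maps are monotone, closeness at the points of a fine finite grid already forces
  uniform closeness (Polya). The same squeezing argument shows that pointwise convergence in
  \<open>G(l1, l2)\<close> is uniform convergence. The Delta-kelleyfication leaves a metric topology
  unchanged as soon as every fast converging sequence lies on a continuous path through its
  limit; in \<open>G(l1, l2)\<close> such a path is obtained by joining consecutive terms by convex
  combinations, which stay in \<open>G(l1, l2)\<close>.\<close>

abbreviation simplex_topology :: "nat \<Rightarrow> (nat \<Rightarrow> real) topology" where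
  "simplex_topology n \<equiv> subtopology (powertop_real UNIV) (standard_simplex n)"

definition delta_open :: "'a topology \<Rightarrow> 'a set \<Rightarrow> bool" where
  "delta_open X U \<longleftrightarrow> U \<subseteq> topspace X \<and>
     (\<forall>n \<sigma>. continuous_map (simplex_topology n) X \<sigma> \<longrightarrow>
        openin (simplex_topology n) {x \<in> standard_simplex n. \<sigma> x \<in> U})"

lemma istopology_delta_open: "istopology (delta_open X)"
  unfolding istopology_def
proof (intro conjI allI impI)
  fix S T assume S: "delta_open X S" and T: "delta_open X T"
  show "delta_open X (S \<inter> T)"
    unfolding delta_open_def
  proof (intro conjI allI impI)
    show "S \<inter> T \<subseteq> topspace X" using S by (auto simp: delta_open_def)
    fix n \<sigma> assume "continuous_map (simplex_topology n) X \<sigma>"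
    then have "openin (simplex_topology n)
        ({x \<in> standard_simplex n. \<sigma> x \<in> S} \<inter> {x \<in> standard_simplex n. \<sigma> x \<in> T})"
      using S T unfolding delta_open_def by (intro openin_Int) auto
    moreover have "{x \<in> standard_simplex n. \<sigma> x \<in> S} \<inter> {x \<in> standard_simplex n. \<sigma> x \<in> T} =
        {x \<in> standard_simplex n. \<sigma> x \<in> S \<inter> T}" by auto
    ultimately show "openin (simplex_topology n) {x \<in> standard_simplex n. \<sigma> x \<in> S \<inter> T}"
      by simp
  qed
next
  fix \<U> assume \<U>: "\<forall>S\<in>\<U>. delta_open X S"
  show "delta_open X (\<Union>\<U>)"
    unfolding delta_open_def
  proof (intro conjI allI impI)
    show "\<Union>\<U> \<subseteq> topspace X" using \<U> by (auto simp: delta_open_def)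
    fix n \<sigma> assume "continuous_map (simplex_topology n) X \<sigma>"
    then have "openin (simplex_topology n) (\<Union>S\<in>\<U>. {x \<in> standard_simplex n. \<sigma> x \<in> S})"
      using \<U> unfolding delta_open_def by (intro openin_Union) auto
    moreover have "(\<Union>S\<in>\<U>. {x \<in> standard_simplex n. \<sigma> x \<in> S}) =
        {x \<in> standard_simplex n. \<sigma> x \<in> \<Union>\<U>}" by auto
    ultimately show "openin (simplex_topology n) {x \<in> standard_simplex n. \<sigma> x \<in> \<Union>\<U>}"
      by simp
  qed
qed

lemma openin_delta_kelleyfication:
  "openin (delta_kelleyfication X) U \<longleftrightarrow> delta_open X U"
proof -
  have "delta_kelleyfication X = topology (delta_open X)"
    unfolding delta_kelleyfication_def delta_open_def by simp
  then show ?thesis by (simp add: topology_inverse'[OF istopology_delta_open])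
qed

lemma openin_imp_openin_delta_kelleyfication:
  assumes "openin X U"
  shows "openin (delta_kelleyfication X) U"
  unfolding openin_delta_kelleyfication delta_open_def
proof (intro conjI allI impI)
  show "U \<subseteq> topspace X" using assms by (rule openin_subset)
  fix n \<sigma> assume "continuous_map (simplex_topology n) X \<sigma>"
  from openin_continuous_map_preimage[OF this assms]
  show "openin (simplex_topology n) {x \<in> standard_simplex n. \<sigma> x \<in> U}" by simp
qed

lemma topspace_delta_kelleyfication [simp]:
  "topspace (delta_kelleyfication X) = topspace X"
proof
  show "topspace (delta_kelleyfication X) \<subseteq> topspace X"
    using openin_topspace[of "delta_kelleyfication X"]
    unfolding openin_delta_kelleyfication delta_open_def by blast
  show "topspace X \<subseteq> topspace (delta_kelleyfication X)"
    by (simp add: openin_imp_openin_delta_kelleyfication openin_subset)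
qed

lemma continuous_map_simplex_delta_kelleyfication [simp]:
  "continuous_map (simplex_topology n) (delta_kelleyfication X) \<sigma> \<longleftrightarrow>
   continuous_map (simplex_topology n) X \<sigma>"
proof
  assume \<sigma>: "continuous_map (simplex_topology n) (delta_kelleyfication X) \<sigma>"
  show "continuous_map (simplex_topology n) X \<sigma>"
    unfolding continuous_map_def
    using continuous_map_funspace[OF \<sigma>]
      openin_continuous_map_preimage[OF \<sigma> openin_imp_openin_delta_kelleyfication]
    by simp
next
  assume \<sigma>: "continuous_map (simplex_topology n) X \<sigma>"
  show "continuous_map (simplex_topology n) (delta_kelleyfication X) \<sigma>"
    unfolding continuous_map_def openin_delta_kelleyfication
    using continuous_map_funspace[OF \<sigma>] \<sigma> by (auto simp: delta_open_def)
qed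

text \<open>Delta-kelleyfication only sees maps out of simplices, so an intermediate
  Delta-kelleyfication (as in the definition of \<open>Gtop\<close> through \<open>TOP\<close>) is invisible.\<close>
lemma delta_kelleyfication_subtopology_delta_kelleyfication:
  "delta_kelleyfication (subtopology (delta_kelleyfication X) S) =
   delta_kelleyfication (subtopology X S)"
  unfolding topology_eq openin_delta_kelleyfication delta_open_def
  by (simp add: continuous_map_in_subtopology)

definition knot :: "nat \<Rightarrow> real" where
  "knot n = 1 / (real n + 1)"

lemma knot_pos: "0 < knot n"
  by (simp add: knot_def)

lemma knot_le_1: "knot n \<le> 1"
  by (simp add: knot_def)

lemma knot_0 [simp]: "knot 0 = 1"
  by (simp add: knot_def)

lemma knot_antimono: "i \<le> j \<Longrightarrow> knot j \<le> knot i"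
  unfolding knot_def by (intro divide_left_mono) auto

lemma knot_strict_antimono: "i < j \<Longrightarrow> knot j < knot i"
  unfolding knot_def by (intro divide_strict_left_mono) auto

lemma knot_diff_Suc: "knot m - knot (Suc m) = 1 / ((real m + 1) * (real m + 2))"
  unfolding knot_def by (simp add: field_simps)

lemma LIMSEQ_knot: "knot \<longlonglongrightarrow> 0"
proof -
  have "knot = (\<lambda>n. inverse (real (Suc n)))"
    by (simp add: fun_eq_iff knot_def inverse_eq_divide)
  then show ?thesis using LIMSEQ_inverse_real_of_nat by simp
qed

lemma exists_knot_less:
  assumes "0 < e"
  obtains N where "knot N < e"
  using order_tendstoD(2)[OF LIMSEQ_knot assms] by (auto simp: eventually_sequentially)

definition simplex_edge :: "real \<Rightarrow> nat \<Rightarrow> real" where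
  "simplex_edge t = (\<lambda>i. if i = 0 then 1 - t else if i = 1 then t else 0)"

lemma simplex_edge_in_simplex: "t \<in> {0..1} \<Longrightarrow> simplex_edge t \<in> standard_simplex 1"
  by (auto simp: standard_simplex_def simplex_edge_def atMost_Suc)

lemma continuous_map_simplex_edge:
  "continuous_map (top_of_set {0..1}) (simplex_topology 1) simplex_edge"
proof -
  have coordinate: "continuous_map (top_of_set {0..1}) euclideanreal (\<lambda>t. simplex_edge t i)" for i
    unfolding simplex_edge_def continuous_map_iff_continuous
    by (cases "i = 0"; cases "i = 1") (simp_all add: continuous_on_op_minus continuous_on_id)
  show ?thesis
    unfolding continuous_map_in_subtopology
  proof
    show "continuous_map (top_of_set {0..1}) (powertop_real UNIV) simplex_edge"
      unfolding continuous_map_componentwise_UNIV using coordinate by blast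
    show "simplex_edge \<in> topspace (top_of_set {0..1}) \<rightarrow> standard_simplex 1"
      using simplex_edge_in_simplex by auto
  qed
qed

lemma continuous_map_simplex_vertex_coordinate:
  "continuous_map (simplex_topology 1) (top_of_set {0..1}) (\<lambda>x. x 1)"
proof -
  have "continuous_map (simplex_topology 1) euclideanreal (\<lambda>x. x 1)"
    by (rule continuous_map_from_subtopology[OF continuous_map_product_projection]) simp
  moreover have "x 1 \<in> {0..1}" if "x \<in> standard_simplex 1" for x
    using that by (simp add: standard_simplex_def)
  ultimately show ?thesis by (simp add: continuous_map_in_subtopology Pi_iff)
qed

lemma delta_open_eventually_along_path:
  assumes U: "delta_open X U" and \<gamma>: "continuous_map (top_of_set {0..1}) X \<gamma>" and "\<gamma> 0 \<in> U"
  shows "\<forall>\<^sub>F n in sequentially. \<gamma> (knot n) \<in> U"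
proof -
  have "continuous_map (simplex_topology 1) X (\<gamma> \<circ> (\<lambda>p. p 1))"
    using continuous_map_simplex_vertex_coordinate \<gamma> by (rule continuous_map_compose)
  then have "openin (simplex_topology 1) {p \<in> standard_simplex 1. (\<gamma> \<circ> (\<lambda>p. p 1)) p \<in> U}"
    using U unfolding delta_open_def by blast
  then have W: "openin (simplex_topology 1) {p \<in> standard_simplex 1. \<gamma> (p 1) \<in> U}"
    by simp
  have "limitin (top_of_set {0..1}) knot 0 sequentially"
    using LIMSEQ_knot knot_pos knot_le_1
    by (simp add: limitin_subtopology limitin_canonical_iff less_imp_le)
  then have "limitin (simplex_topology 1) (simplex_edge \<circ> knot) (simplex_edge 0) sequentially"
    by (rule continuous_map_limit[OF continuous_map_simplex_edge])
  moreover have "simplex_edge 0 \<in> {p \<in> standard_simplex 1. \<gamma> (p 1) \<in> U}"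
    using simplex_edge_in_simplex[of 0] \<open>\<gamma> 0 \<in> U\<close> by (simp add: simplex_edge_def)
  ultimately have "\<forall>\<^sub>F n in sequentially. simplex_edge (knot n) \<in> {p \<in> standard_simplex 1. \<gamma> (p 1) \<in> U}"
    using W unfolding limitin_def comp_def by blast
  then show ?thesis
    by (rule eventually_mono) (simp add: simplex_edge_def)
qed

text \<open>If every sequence converging fast enough can be threaded on a path, a metric
  topology is its own Delta-kelleyfication: a point of a Delta-open set that is not an
  interior point would be the limit of such a sequence outside the set.\<close>
lemma (in Metric_space) delta_kelleyfication_mtopology_eqI:
  assumes threaded: "\<And>x g. \<lbrakk>x \<in> M; \<And>n. g n \<in> M; \<And>n. d x (g n) \<le> knot n\<rbrakk> \<Longrightarrow>
    \<exists>\<gamma>. continuous_map (top_of_set {0..1}) mtopology \<gamma> \<and> \<gamma> 0 = x \<and> (\<forall>n. \<gamma> (knot n) = g n)"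
  shows "delta_kelleyfication mtopology = mtopology"
  unfolding topology_eq
proof (intro allI iffI)
  fix U assume "openin (delta_kelleyfication mtopology) U"
  then have U: "delta_open mtopology U" and "U \<subseteq> M"
    unfolding openin_delta_kelleyfication delta_open_def by auto
  show "openin mtopology U"
    unfolding openin_mtopology
  proof (intro conjI allI impI \<open>U \<subseteq> M\<close>)
    fix x assume "x \<in> U"
    show "\<exists>r>0. mball x r \<subseteq> U"
    proof (rule ccontr)
      assume "\<not> (\<exists>r>0. mball x r \<subseteq> U)"
      then have "\<exists>y. y \<in> mball x (knot n) \<and> y \<notin> U" for n
        using knot_pos[of n] by blast
      then obtain g where g: "\<And>n. g n \<in> mball x (knot n)" "\<And>n. g n \<notin> U"
        by metis
      have "g n \<in> M" "d x (g n) \<le> knot n" for n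
        using g(1)[of n] by auto
      then obtain \<gamma> where \<gamma>: "continuous_map (top_of_set {0..1}) mtopology \<gamma>"
        and "\<gamma> 0 = x" and "\<And>n. \<gamma> (knot n) = g n"
        using threaded[of x g] \<open>x \<in> U\<close> \<open>U \<subseteq> M\<close> by blast
      then have "\<forall>\<^sub>F n in sequentially. g n \<in> U"
        using delta_open_eventually_along_path[OF U \<gamma>] \<open>x \<in> U\<close> by simp
      then show False
        using g(2) eventually_sequentially by auto
    qed
  qed
qed (rule openin_imp_openin_delta_kelleyfication)

definition knot_index :: "real \<Rightarrow> nat" where
  "knot_index s = nat \<lfloor>1 / s\<rfloor> - 1"

lemma knot_index_bounds:
  assumes "0 < s" "s \<le> 1"
  shows "knot (Suc (knot_index s)) < s" "s \<le> knot (knot_index s)"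
proof -
  define k where "k = \<lfloor>1 / s\<rfloor>"
  have "1 \<le> 1 / s" using assms by (simp add: field_simps)
  then have k1: "1 \<le> k" unfolding k_def by linarith
  have k: "of_int k \<le> 1 / s" "1 / s < of_int k + 1" unfolding k_def by linarith+
  have index: "real (knot_index s) + 1 = of_int k"
    using k1 by (simp add: knot_index_def k_def[symmetric] of_nat_diff)
  have "0 < (of_int k :: real)" using k1 by simp
  moreover have "s * of_int k \<le> 1" "1 < s * (of_int k + 1)"
    using k assms(1) by (simp_all add: field_simps)
  ultimately show "knot (Suc (knot_index s)) < s" "s \<le> knot (knot_index s)"
    unfolding knot_def using index by (simp_all add: field_simps)
qed

lemma knot_interval_unique:
  assumes "knot (Suc i) < s" "s \<le> knot i" "knot (Suc j) < s" "s \<le> knot j"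
  shows "i = j"
proof (rule ccontr)
  assume "i \<noteq> j"
  then have "knot j \<le> knot (Suc i) \<or> knot i \<le> knot (Suc j)"
    by (metis knot_antimono not_less_eq_eq linorder_neqE_nat less_eq_Suc_le)
  then show False using assms by linarith
qed

definition knot_weight :: "nat \<Rightarrow> real \<Rightarrow> real" where
  "knot_weight m s = (s - knot (Suc m)) / (knot m - knot (Suc m))"

lemma knot_weight_range:
  assumes "knot (Suc m) \<le> s" "s \<le> knot m"
  shows "knot_weight m s \<in> {0..1}"
  using assms knot_strict_antimono[of m "Suc m"] by (simp add: knot_weight_def divide_le_eq_1)

lemma knot_weight_knot [simp]: "knot_weight m (knot m) = 1"
  using knot_strict_antimono[of m "Suc m"] by (simp add: knot_weight_def)

lemma knot_weight_knot_Suc [simp]: "knot_weight m (knot (Suc m)) = 0"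
  by (simp add: knot_weight_def)

lemma abs_knot_weight_diff:
  "\<bar>knot_weight m s - knot_weight m s'\<bar> = \<bar>s - s'\<bar> * ((real m + 1) * (real m + 2))"
proof -
  have "knot_weight m s - knot_weight m s' = (s - s') / (knot m - knot (Suc m))"
    unfolding knot_weight_def by (simp add: diff_divide_distrib)
  also have "\<dots> = (s - s') * ((real m + 1) * (real m + 2))"
    unfolding knot_diff_Suc by simp
  finally show ?thesis by (simp add: abs_mult)
qed

text \<open>An abstract convex structure on a metric space, in the spirit of Takahashi's convex
  metric spaces; \<open>cmb w x y\<close> plays the role of \<open>w x + (1 - w) y\<close>.\<close>
locale convex_metric = Metric_space M d
  for M :: "'a set" and d :: "'a \<Rightarrow> 'a \<Rightarrow> real" +
  fixes cmb :: "real \<Rightarrow> 'a \<Rightarrow> 'a \<Rightarrow> 'a"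
  assumes cmb_in_M: "\<lbrakk>w \<in> {0..1}; x \<in> M; y \<in> M\<rbrakk> \<Longrightarrow> cmb w x y \<in> M"
    and cmb_1: "\<lbrakk>x \<in> M; y \<in> M\<rbrakk> \<Longrightarrow> cmb 1 x y = x"
    and cmb_0: "\<lbrakk>x \<in> M; y \<in> M\<rbrakk> \<Longrightarrow> cmb 0 x y = y"
    and mdist_cmb_le_max:
      "\<lbrakk>w \<in> {0..1}; z \<in> M; x \<in> M; y \<in> M\<rbrakk> \<Longrightarrow> d z (cmb w x y) \<le> max (d z x) (d z y)"
    and mdist_cmb_cmb:
      "\<lbrakk>w \<in> {0..1}; v \<in> {0..1}; x \<in> M; y \<in> M\<rbrakk> \<Longrightarrow> d (cmb w x y) (cmb v x y) \<le> \<bar>w - v\<bar> * d x y"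

locale convex_metric_sequence = convex_metric +
  fixes x0 :: 'a and g :: "nat \<Rightarrow> 'a"
  assumes x0_in_M: "x0 \<in> M" and g_in_M: "g n \<in> M" and mdist_x0_g: "d x0 (g n) \<le> knot n"
begin

text \<open>On \<open>[knot (Suc m), knot m]\<close> the path runs linearly from \<open>g (Suc m)\<close> to \<open>g m\<close>.
  The weight moves at speed \<open>(m + 1) (m + 2)\<close> there, while \<open>d (g m) (g (Suc m)) \<le> 2 / (m + 1)\<close>,
  so the path is \<open>2 (N + 2)\<close>-Lipschitz on \<open>[knot N, 1]\<close>; at \<open>0\<close> it is continuous because
  every point on piece \<open>m\<close> stays within \<open>knot m\<close> of \<open>x0\<close>.\<close>
definition thread_path :: "real \<Rightarrow> 'a" where
  "thread_path s = (if s \<le> 0 then x0 else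
     cmb (knot_weight (knot_index s) s) (g (knot_index s)) (g (Suc (knot_index s))))"

lemma thread_path_0: "thread_path 0 = x0"
  by (simp add: thread_path_def)

lemma thread_path_piece:
  assumes "knot (Suc m) \<le> s" "s \<le> knot m"
  shows "thread_path s = cmb (knot_weight m s) (g m) (g (Suc m))"
proof -
  have s: "0 < s" "s \<le> 1" using assms knot_pos[of "Suc m"] knot_le_1[of m] by linarith+
  note index = knot_index_bounds[OF s]
  have path_s: "thread_path s =
      cmb (knot_weight (knot_index s) s) (g (knot_index s)) (g (Suc (knot_index s)))"
    using s by (simp add: thread_path_def)
  show ?thesis
  proof (cases "s = knot (Suc m)")
    case False
    then have "knot_index s = m"
      using knot_interval_unique[OF index] assms by force
    then show ?thesis using path_s by simp
  next
    case True
    then have "knot_index s = Suc m"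
      using knot_interval_unique[OF index] knot_strict_antimono[of "Suc m" "Suc (Suc m)"] by force
    then show ?thesis using path_s True by (simp add: cmb_1 cmb_0 g_in_M)
  qed
qed

lemma thread_path_knot: "thread_path (knot n) = g n"
  using thread_path_piece[of n "knot n"] knot_strict_antimono[of n "Suc n"]
  by (simp add: cmb_1 g_in_M)

lemma thread_path_in_M:
  assumes "s \<in> {0..1}"
  shows "thread_path s \<in> M"
proof (cases "s = 0")
  case True
  then show ?thesis by (simp add: thread_path_0 x0_in_M)
next
  case False
  then have "0 < s" "s \<le> 1" using assms by auto
  then have "knot_weight (knot_index s) s \<in> {0..1}"
    using knot_index_bounds[of s] by (intro knot_weight_range) auto
  then show ?thesis
    using \<open>0 < s\<close> by (simp add: thread_path_def cmb_in_M g_in_M)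
qed

lemma mdist_g_Suc: "d (g m) (g (Suc m)) \<le> 2 / (real m + 1)"
proof -
  have "d (g m) (g (Suc m)) \<le> d x0 (g m) + d x0 (g (Suc m))"
    using triangle[OF g_in_M x0_in_M g_in_M] commute by simp
  also have "\<dots> \<le> knot m + knot m"
    using mdist_x0_g[of m] mdist_x0_g[of "Suc m"] knot_antimono[of m "Suc m"] by simp
  finally show ?thesis by (simp add: knot_def)
qed

lemma mdist_thread_path_piece:
  assumes "knot (Suc m) \<le> s" "s \<le> knot m" "knot (Suc m) \<le> s'" "s' \<le> knot m"
  shows "d (thread_path s) (thread_path s') \<le> 2 * (real m + 2) * \<bar>s - s'\<bar>"
proof -
  have "d (thread_path s) (thread_path s') \<le>
      \<bar>knot_weight m s - knot_weight m s'\<bar> * d (g m) (g (Suc m))"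
    unfolding thread_path_piece[OF assms(1,2)] thread_path_piece[OF assms(3,4)]
    using assms by (intro mdist_cmb_cmb knot_weight_range g_in_M)
  also have "\<dots> \<le> (\<bar>s - s'\<bar> * ((real m + 1) * (real m + 2))) * (2 / (real m + 1))"
    unfolding abs_knot_weight_diff by (intro mult_left_mono mdist_g_Suc) auto
  also have "\<dots> = 2 * (real m + 2) * \<bar>s - s'\<bar>"
    by (simp add: field_simps)
  finally show ?thesis .
qed

lemma mdist_thread_path_ordered:
  assumes "N \<le> K" "s \<in> {knot N..1}" "s' \<in> {knot N..1}" "s \<le> s'"
  shows "d (thread_path s) (thread_path s') \<le> 2 * (real K + 2) * \<bar>s - s'\<bar>"
  using assms
proof (induction N arbitrary: s s')
  case 0
  then show ?case using thread_path_in_M[of 1] by simp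
next
  case (Suc N)
  let ?L = "2 * (real K + 2)"
  have L: "2 * (real N + 2) \<le> ?L" using Suc.prems(1) by simp
  have in_M: "thread_path t \<in> M" if "t \<in> {knot (Suc N)..1}" for t
    using that knot_pos[of "Suc N"] by (intro thread_path_in_M) auto
  consider "knot N \<le> s" | "s' \<le> knot N" | "s < knot N" "knot N < s'" by linarith
  then show ?case
  proof cases
    case 1
    then show ?thesis using Suc by auto
  next
    case 2
    then have "d (thread_path s) (thread_path s') \<le> 2 * (real N + 2) * \<bar>s - s'\<bar>"
      using Suc.prems by (intro mdist_thread_path_piece) auto
    also have "\<dots> \<le> ?L * \<bar>s - s'\<bar>" using L by (intro mult_right_mono) auto
    finally show ?thesis .
  next
    case 3
    have "d (thread_path s) (thread_path s') \<le>
        d (thread_path s) (thread_path (knot N)) + d (thread_path (knot N)) (thread_path s')"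
      using Suc.prems 3 knot_le_1[of N] by (intro triangle in_M) auto
    also have "\<dots> \<le> 2 * (real N + 2) * \<bar>s - knot N\<bar> + ?L * \<bar>knot N - s'\<bar>"
    proof (rule add_mono)
      show "d (thread_path s) (thread_path (knot N)) \<le> 2 * (real N + 2) * \<bar>s - knot N\<bar>"
        using Suc.prems 3 by (intro mdist_thread_path_piece) auto
      show "d (thread_path (knot N)) (thread_path s') \<le> ?L * \<bar>knot N - s'\<bar>"
        using Suc 3 knot_le_1[of N] by auto
    qed
    also have "\<dots> \<le> ?L * \<bar>s - knot N\<bar> + ?L * \<bar>knot N - s'\<bar>"
      using L by (intro add_right_mono mult_right_mono) auto
    also have "\<dots> = ?L * \<bar>s - s'\<bar>" using 3 by (simp add: algebra_simps)
    finally show ?thesis .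
  qed
qed

lemma mdist_thread_path_le:
  assumes "s \<in> {knot N..1}" "s' \<in> {knot N..1}"
  shows "d (thread_path s) (thread_path s') \<le> 2 * (real N + 2) * \<bar>s - s'\<bar>"
  using mdist_thread_path_ordered[of N N s s'] mdist_thread_path_ordered[of N N s' s] assms
  by (cases "s \<le> s'") (auto simp: commute abs_minus_commute)

lemma mdist_x0_thread_path:
  assumes "0 < s" "s \<le> knot N"
  shows "d x0 (thread_path s) \<le> knot N"
proof -
  define m where "m = knot_index s"
  have m: "knot (Suc m) < s" "s \<le> knot m"
    using knot_index_bounds[OF assms(1)] assms(2) knot_le_1[of N] by (auto simp: m_def)
  have "N \<le> m"
    using m assms(2) knot_antimono[of "Suc m" N] by (metis not_less_eq_eq not_le order.strict_trans1)
  have "d x0 (thread_path s) = d x0 (cmb (knot_weight m s) (g m) (g (Suc m)))"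
    using m by (subst thread_path_piece[of m s]) auto
  also have "\<dots> \<le> max (d x0 (g m)) (d x0 (g (Suc m)))"
    using m by (intro mdist_cmb_le_max knot_weight_range x0_in_M g_in_M) auto
  also have "\<dots> \<le> knot N"
    using mdist_x0_g[of m] mdist_x0_g[of "Suc m"] knot_antimono[OF \<open>N \<le> m\<close>]
      knot_antimono[of N "Suc m"] \<open>N \<le> m\<close> by simp
  finally show ?thesis .
qed

lemma thread_path_local_bound:
  assumes "s \<in> {0..1}" "0 < e"
  obtains \<delta> where "0 < \<delta>"
    "\<And>y. \<lbrakk>y \<in> {0..1}; \<bar>s - y\<bar> < \<delta>\<rbrakk> \<Longrightarrow> d (thread_path s) (thread_path y) < e"
proof (cases "s = 0")
  case True
  obtain N where N: "knot N < e" using exists_knot_less[OF assms(2)] .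
  show ?thesis
  proof (rule that[OF knot_pos[of N]])
    fix y assume y: "y \<in> {0..1}" "\<bar>s - y\<bar> < knot N"
    show "d (thread_path s) (thread_path y) < e"
    proof (cases "y = 0")
      case True
      then show ?thesis using assms(2) \<open>s = 0\<close> by (simp add: thread_path_0 x0_in_M)
    next
      case False
      then show ?thesis
        using y N mdist_x0_thread_path[of y N] \<open>s = 0\<close> by (simp add: thread_path_0)
    qed
  qed
next
  case False
  then have "0 < s" using assms(1) by simp
  then obtain N where N: "knot N < s" using exists_knot_less by blast
  define L where "L = 2 * (real N + 2)"
  have "0 < L" by (simp add: L_def)
  show ?thesis
  proof (rule that)
    show "0 < min (s - knot N) (e / L)" using N assms(2) \<open>0 < L\<close> by simp
    fix y assume y: "y \<in> {0..1}" "\<bar>s - y\<bar> < min (s - knot N) (e / L)"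
    then have "d (thread_path s) (thread_path y) \<le> L * \<bar>s - y\<bar>"
      unfolding L_def using assms(1) N by (intro mdist_thread_path_le) auto
    also have "\<dots> < L * (e / L)" using y \<open>0 < L\<close> by (intro mult_strict_left_mono) auto
    finally show "d (thread_path s) (thread_path y) < e" using \<open>0 < L\<close> by simp
  qed
qed

lemma continuous_map_thread_path: "continuous_map (top_of_set {0..1}) mtopology thread_path"
  unfolding continuous_map_to_metric
proof (intro ballI allI impI)
  fix s and e :: real assume "s \<in> topspace (top_of_set {0..1::real})" and "0 < e"
  then have s: "s \<in> {0..1}" by simp
  obtain \<delta> where "0 < \<delta>"
    and \<delta>: "\<And>y. \<lbrakk>y \<in> {0..1}; \<bar>s - y\<bar> < \<delta>\<rbrakk> \<Longrightarrow> d (thread_path s) (thread_path y) < e"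
    using thread_path_local_bound[OF s \<open>0 < e\<close>] by blast
  have "thread_path y \<in> mball (thread_path s) e" if "y \<in> {0..1} \<inter> ball s \<delta>" for y
    using that \<delta>[of y] s by (simp add: thread_path_in_M dist_real_def)
  moreover have "openin (top_of_set {0..1}) ({0..1} \<inter> ball s \<delta>)"
    by (rule openin_open_Int) simp
  ultimately show "\<exists>U. openin (top_of_set {0..1}) U \<and> s \<in> U \<and>
      (\<forall>y\<in>U. thread_path y \<in> mball (thread_path s) e)"
    using s \<open>0 < \<delta>\<close> by (intro exI[of _ "{0..1} \<inter> ball s \<delta>"]) auto
qed

end

context convex_metric
begin

lemma fast_sequence_on_path:
  assumes "x \<in> M" "\<And>n. g n \<in> M" "\<And>n. d x (g n) \<le> knot n"
  shows "\<exists>\<gamma>. continuous_map (top_of_set {0..1}) mtopology \<gamma> \<and> \<gamma> 0 = x \<and> (\<forall>n. \<gamma> (knot n) = g n)"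
proof -
  interpret convex_metric_sequence M d cmb x g
    using assms by unfold_locales
  show ?thesis
    using continuous_map_thread_path thread_path_0 thread_path_knot by blast
qed

lemma delta_kelleyfication_mtopology: "delta_kelleyfication mtopology = mtopology"
  using fast_sequence_on_path by (rule delta_kelleyfication_mtopology_eqI)

end

lemma Gset_extensional: "f \<in> Gset l1 l2 \<Longrightarrow> f \<in> extensional {0..l1}"
  by (simp add: Gset_def)

lemma Gset_homeomorphic_map:
  "f \<in> Gset l1 l2 \<Longrightarrow> homeomorphic_map (top_of_set {0..l1}) (top_of_set {0..l2}) f"
  by (simp add: Gset_def)

lemma Gset_mono_on: "f \<in> Gset l1 l2 \<Longrightarrow> mono_on {0..l1} f"
  by (simp add: Gset_def)

lemma Gset_image: "f \<in> Gset l1 l2 \<Longrightarrow> f ` {0..l1} = {0..l2}"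
  using homeomorphic_imp_surjective_map[OF Gset_homeomorphic_map] by fastforce

lemma Gset_in_range: "f \<in> Gset l1 l2 \<Longrightarrow> x \<in> {0..l1} \<Longrightarrow> f x \<in> {0..l2}"
  using Gset_image by blast

lemma Gset_continuous_on: "f \<in> Gset l1 l2 \<Longrightarrow> continuous_on {0..l1} f"
  using homeomorphic_imp_continuous_map[OF Gset_homeomorphic_map]
  by (simp add: continuous_map_subtopology_eu)

lemma Gset_in_cmaps: "f \<in> Gset l1 l2 \<Longrightarrow> f \<in> cmaps (top_of_set {0..l1}) (top_of_set {0..l2})"
  unfolding cmaps_def
  using Gset_extensional homeomorphic_imp_continuous_map[OF Gset_homeomorphic_map] by auto

lemma Gset_eqI: "\<lbrakk>f \<in> Gset l1 l2; g \<in> Gset l1 l2; \<And>x. x \<in> {0..l1} \<Longrightarrow> f x = g x\<rbrakk> \<Longrightarrow> f = g"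
  using Gset_extensional extensionalityI by metis

lemma Gset_strict_mono_on:
  assumes "f \<in> Gset l1 l2"
  shows "strict_mono_on {0..l1} f"
proof (rule strict_mono_onI)
  fix x y assume xy: "x \<in> {0..l1}" "y \<in> {0..l1}" "x < y"
  have "inj_on f {0..l1}"
    using homeomorphic_imp_injective_map[OF Gset_homeomorphic_map[OF assms]] by simp
  then have "f x \<noteq> f y" using xy by (metis inj_onD order_less_irrefl)
  then show "f x < f y" using mono_onD[OF Gset_mono_on[OF assms] xy(1,2)] xy(3) by simp
qed

lemma Gset_endpoints:
  assumes "f \<in> Gset l1 l2" "0 \<le> l1" "0 \<le> l2"
  shows "f 0 = 0" "f l1 = l2"
proof -
  have "0 \<in> f ` {0..l1}" "l2 \<in> f ` {0..l1}" using Gset_image[OF assms(1)] assms by auto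
  then obtain x y where "x \<in> {0..l1}" "f x = 0" "y \<in> {0..l1}" "f y = l2"
    by (metis imageE)
  then have "f 0 \<le> 0" "l2 \<le> f l1"
    using mono_onD[OF Gset_mono_on[OF assms(1)]] assms(2) by (metis atLeastAtMost_iff order_refl)+
  moreover have "0 \<le> f 0" "f l1 \<le> l2" using Gset_in_range[OF assms(1)] assms(2) by auto
  ultimately show "f 0 = 0" "f l1 = l2" by simp_all
qed

lemma Gset_intro:
  assumes "0 < l1" "h \<in> extensional {0..l1}" "continuous_on {0..l1} h"
    "strict_mono_on {0..l1} h" "h 0 = 0" "h l1 = l2"
  shows "h \<in> Gset l1 l2"
proof -
  have mono: "mono_on {0..l1} h" using assms(4) by (rule strict_mono_on_imp_mono_on)
  have "h ` {0..l1} \<subseteq> {0..l2}"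
    using mono_onD[OF mono, of 0] mono_onD[OF mono, of _ l1] assms(1,5,6) by auto
  moreover have "{0..l2} \<subseteq> h ` {0..l1}"
    using IVT'[of h 0 _ l1] assms(1,3,5,6) by force
  ultimately have image: "h ` {0..l1} = {0..l2}" by blast
  have "homeomorphic_map (top_of_set {0..l1}) (top_of_set {0..l2}) h"
  proof (rule continuous_imp_homeomorphic_map)
    show "continuous_map (top_of_set {0..l1}) (top_of_set {0..l2}) h"
      using assms(3) image
      by (simp add: continuous_map_subtopology_eu image_subset_iff_funcset[symmetric])
    show "inj_on h (topspace (top_of_set {0..l1}))"
      using strict_mono_on_imp_inj_on[OF assms(4)] by simp
  qed (simp_all add: compact_space_subtopology Hausdorff_space_subtopology image)
  then show ?thesis using assms(2) mono by (simp add: Gset_def)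
qed

definition affine_comb :: "real \<Rightarrow> real \<Rightarrow> (real \<Rightarrow> real) \<Rightarrow> (real \<Rightarrow> real) \<Rightarrow> real \<Rightarrow> real" where
  "affine_comb l w f g = restrict (\<lambda>x. w * f x + (1 - w) * g x) {0..l}"

lemma affine_comb_apply: "x \<in> {0..l} \<Longrightarrow> affine_comb l w f g x = w * f x + (1 - w) * g x"
  by (simp add: affine_comb_def)

lemma affine_comb_in_Gset:
  assumes f: "f \<in> Gset l1 l2" and g: "g \<in> Gset l1 l2" and w: "w \<in> {0..1}"
    and "0 < l1" "0 \<le> l2"
  shows "affine_comb l1 w f g \<in> Gset l1 l2"
proof (rule Gset_intro)
  have "continuous_on {0..l1} (\<lambda>x. w * f x + (1 - w) * g x)"
    using Gset_continuous_on[OF f] Gset_continuous_on[OF g] by (intro continuous_intros)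
  then show "continuous_on {0..l1} (affine_comb l1 w f g)"
    by (rule continuous_on_eq) (simp add: affine_comb_apply)
  show "strict_mono_on {0..l1} (affine_comb l1 w f g)"
  proof (rule strict_mono_onI)
    fix x y assume xy: "x \<in> {0..l1}" "y \<in> {0..l1}" "x < y"
    have "f x < f y" "g x < g y"
      using strict_mono_onD[OF Gset_strict_mono_on[OF f] xy] strict_mono_onD[OF Gset_strict_mono_on[OF g] xy]
      by auto
    moreover have "w * f x \<le> w * f y" "(1 - w) * g x \<le> (1 - w) * g y"
      using \<open>f x < f y\<close> \<open>g x < g y\<close> w by (simp_all add: mult_left_mono)
    moreover have "w * f x < w * f y \<or> (1 - w) * g x < (1 - w) * g y"
      using \<open>f x < f y\<close> \<open>g x < g y\<close> w by (cases "w = 0") simp_all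
    ultimately have "w * f x + (1 - w) * g x < w * f y + (1 - w) * g y"
      by linarith
    then show "affine_comb l1 w f g x < affine_comb l1 w f g y"
      using xy by (simp add: affine_comb_apply)
  qed
  show "affine_comb l1 w f g 0 = 0" "affine_comb l1 w f g l1 = l2"
    using Gset_endpoints[OF f] Gset_endpoints[OF g] assms(4,5)
    by (simp_all add: affine_comb_apply algebra_simps)
qed (simp_all add: affine_comb_def \<open>0 < l1\<close>)

lemma affine_comb_1: "f \<in> Gset l1 l2 \<Longrightarrow> affine_comb l1 1 f g = f"
  using Gset_extensional[of f] by (auto simp: affine_comb_def extensional_def)

lemma affine_comb_0: "g \<in> Gset l1 l2 \<Longrightarrow> affine_comb l1 0 f g = g"
  using Gset_extensional[of g] by (auto simp: affine_comb_def extensional_def)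

definition sup_dist :: "real \<Rightarrow> (real \<Rightarrow> real) \<Rightarrow> (real \<Rightarrow> real) \<Rightarrow> real" where
  "sup_dist l f g = max 0 (SUP x\<in>{0..l}. \<bar>f x - g x\<bar>)"

lemma sup_dist_nonneg: "0 \<le> sup_dist l f g"
  by (simp add: sup_dist_def)

lemma abs_le_sup_dist:
  assumes "f \<in> Gset l1 l2" "g \<in> Gset l1 l2" "x \<in> {0..l1}"
  shows "\<bar>f x - g x\<bar> \<le> sup_dist l1 f g"
proof -
  have "bdd_above ((\<lambda>x. \<bar>f x - g x\<bar>) ` {0..l1})"
    using Gset_in_range[OF assms(1)] Gset_in_range[OF assms(2)]
    by (intro bdd_aboveI[where M = l2]) fastforce
  then have "\<bar>f x - g x\<bar> \<le> (SUP x\<in>{0..l1}. \<bar>f x - g x\<bar>)"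
    using assms(3) by (rule cSUP_upper2) simp
  then show ?thesis unfolding sup_dist_def by linarith
qed

lemma sup_dist_le:
  assumes "0 \<le> e" "0 \<le> l" "\<And>x. x \<in> {0..l} \<Longrightarrow> \<bar>f x - g x\<bar> \<le> e"
  shows "sup_dist l f g \<le> e"
proof -
  have "(SUP x\<in>{0..l}. \<bar>f x - g x\<bar>) \<le> e"
    using assms by (intro cSUP_least) auto
  then show ?thesis using assms(1) by (simp add: sup_dist_def)
qed

lemma Metric_space_Gset:
  assumes "0 \<le> l1"
  shows "Metric_space (Gset l1 l2) (sup_dist l1)"
proof
  show "sup_dist l1 f g = sup_dist l1 g f" for f g
    unfolding sup_dist_def by (simp add: abs_minus_commute)
  show "sup_dist l1 f g = 0 \<longleftrightarrow> f = g" if "f \<in> Gset l1 l2" "g \<in> Gset l1 l2" for f g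
    using abs_le_sup_dist[OF that] sup_dist_le[of 0 l1 f f] sup_dist_nonneg[of l1 f f] assms
    by (auto intro: Gset_eqI[OF that] antisym)
  show "sup_dist l1 f h \<le> sup_dist l1 f g + sup_dist l1 g h"
    if "f \<in> Gset l1 l2" "g \<in> Gset l1 l2" "h \<in> Gset l1 l2" for f g h
    using assms abs_le_sup_dist[OF that(1,2)] abs_le_sup_dist[OF that(2,3)] sup_dist_nonneg
    by (intro sup_dist_le) (fastforce intro: add_nonneg_nonneg)+
qed (rule sup_dist_nonneg)

lemma sup_dist_affine_comb_le_max:
  assumes "h \<in> Gset l1 l2" "f \<in> Gset l1 l2" "g \<in> Gset l1 l2" "w \<in> {0..1}" "0 \<le> l1"
  shows "sup_dist l1 h (affine_comb l1 w f g) \<le> max (sup_dist l1 h f) (sup_dist l1 h g)"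
proof (rule sup_dist_le)
  fix x assume x: "x \<in> {0..l1}"
  let ?M = "max (sup_dist l1 h f) (sup_dist l1 h g)"
  have "\<bar>h x - affine_comb l1 w f g x\<bar> = \<bar>w * (h x - f x) + (1 - w) * (h x - g x)\<bar>"
    using x by (simp add: affine_comb_apply algebra_simps)
  also have "\<dots> \<le> w * \<bar>h x - f x\<bar> + (1 - w) * \<bar>h x - g x\<bar>"
    using assms(4) by (metis abs_mult abs_of_nonneg abs_triangle_ineq atLeastAtMost_iff diff_ge_0_iff_ge)
  also have "\<dots> \<le> w * ?M + (1 - w) * ?M"
    using abs_le_sup_dist[OF assms(1,2) x] abs_le_sup_dist[OF assms(1,3) x] assms(4)
    by (intro add_mono mult_left_mono) auto
  finally show "\<bar>h x - affine_comb l1 w f g x\<bar> \<le> ?M" by (simp add: algebra_simps)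
qed (use assms sup_dist_nonneg in \<open>auto intro: max.coboundedI1\<close>)

lemma sup_dist_affine_comb_affine_comb:
  assumes "f \<in> Gset l1 l2" "g \<in> Gset l1 l2" "0 \<le> l1"
  shows "sup_dist l1 (affine_comb l1 w f g) (affine_comb l1 v f g) \<le> \<bar>w - v\<bar> * sup_dist l1 f g"
proof (rule sup_dist_le)
  fix x assume x: "x \<in> {0..l1}"
  have "\<bar>affine_comb l1 w f g x - affine_comb l1 v f g x\<bar> = \<bar>w - v\<bar> * \<bar>f x - g x\<bar>"
    using x by (simp add: affine_comb_apply abs_mult[symmetric] algebra_simps)
  also have "\<dots> \<le> \<bar>w - v\<bar> * sup_dist l1 f g"
    using abs_le_sup_dist[OF assms(1,2) x] by (intro mult_left_mono) auto
  finally show "\<bar>affine_comb l1 w f g x - affine_comb l1 v f g x\<bar> \<le> \<bar>w - v\<bar> * sup_dist l1 f g" .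
qed (use assms sup_dist_nonneg in auto)

lemma grid_interval_containing:
  assumes "0 < h" "a \<le> x" "x < a + real N * h"
  obtains k where "k < N" "a + real k * h \<le> x" "x < a + real (Suc k) * h"
  using assms(3)
proof (induction N)
  case (Suc N)
  show ?case
  proof (cases "x < a + real N * h")
    case True
    then show ?thesis using Suc.IH Suc.prems(1) less_SucI by blast
  next
    case False
    then show ?thesis using Suc.prems by (intro Suc.prems(1)[of N]) simp_all
  qed
qed (use assms(2) in simp)

lemma finite_grid_brackets:
  fixes a b \<delta> :: real
  assumes "a < b" "0 < \<delta>"
  obtains P where "finite P" "P \<subseteq> {a..b}"
    "\<And>x. x \<in> {a..b} \<Longrightarrow> \<exists>t1\<in>P. \<exists>t2\<in>P. t1 \<le> x \<and> x \<le> t2 \<and> t2 - t1 < \<delta>"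
proof -
  obtain N :: nat where N: "(b - a) / \<delta> < real N" using reals_Archimedean2 by blast
  moreover have "0 < (b - a) / \<delta>" using assms by simp
  ultimately have "0 < N" by simp
  define h where "h = (b - a) / real N"
  have "0 < h" "h < \<delta>" "a + real N * h = b"
    using \<open>0 < N\<close> assms N by (simp_all add: h_def field_simps)
  define P where "P = (\<lambda>k. a + real k * h) ` {..N}"
  have grid: "a + real k * h \<in> P \<inter> {a..b}" if "k \<le> N" for k
  proof -
    have "real k * h \<le> real N * h" using that \<open>0 < h\<close> by (intro mult_right_mono) auto
    then show ?thesis using that \<open>0 < h\<close> \<open>a + real N * h = b\<close> by (auto simp: P_def)
  qed
  show ?thesis
  proof
    show "finite P" by (simp add: P_def)
    show "P \<subseteq> {a..b}" using grid by (auto simp: P_def)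
    fix x assume x: "x \<in> {a..b}"
    show "\<exists>t1\<in>P. \<exists>t2\<in>P. t1 \<le> x \<and> x \<le> t2 \<and> t2 - t1 < \<delta>"
    proof (cases "x = b")
      case True
      moreover have "b \<in> P" using grid[of N] \<open>a + real N * h = b\<close> by simp
      ultimately show ?thesis using assms(2) by (intro bexI[of _ b]) auto
    next
      case False
      then obtain k where "k < N" "a + real k * h \<le> x" "x \<le> a + real (Suc k) * h"
        using grid_interval_containing[OF \<open>0 < h\<close>, of a x N] x \<open>a + real N * h = b\<close>
        by (auto intro: less_imp_le)
      moreover have "a + real (Suc k) * h - (a + real k * h) < \<delta>"
        using \<open>h < \<delta>\<close> by (simp add: algebra_simps)
      moreover have "a + real k * h \<in> P" "a + real (Suc k) * h \<in> P"
        using grid[of k] grid[of "Suc k"] \<open>k < N\<close> by auto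
      ultimately show ?thesis by blast
    qed
  qed
qed

text \<open>The monotone function is squeezed between its values at the grid points bracketing \<open>x\<close>
  (Polya).\<close>
lemma uniform_bound_from_samples:
  fixes f :: "real \<Rightarrow> real"
  assumes "continuous_on {a..b} f" "a < b" "0 < e"
  obtains P where "finite P" "P \<subseteq> {a..b}" "P \<noteq> {}"
    "\<And>g x. \<lbrakk>mono_on {a..b} g; \<And>t. t \<in> P \<Longrightarrow> \<bar>g t - f t\<bar> < e; x \<in> {a..b}\<rbrakk> \<Longrightarrow>
       \<bar>f x - g x\<bar> \<le> 2 * e"
proof -
  have "uniformly_continuous_on {a..b} f"
    using assms(1) by (intro compact_uniformly_continuous) auto
  then obtain \<delta> where "0 < \<delta>"
    and \<delta>: "\<And>x y. \<lbrakk>x \<in> {a..b}; y \<in> {a..b}; dist y x < \<delta>\<rbrakk> \<Longrightarrow> \<bar>f y - f x\<bar> < e"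
    unfolding uniformly_continuous_on_def dist_real_def using assms(3) by metis
  obtain P where P: "finite P" "P \<subseteq> {a..b}"
    and bracket: "\<And>x. x \<in> {a..b} \<Longrightarrow> \<exists>t1\<in>P. \<exists>t2\<in>P. t1 \<le> x \<and> x \<le> t2 \<and> t2 - t1 < \<delta>"
    using finite_grid_brackets[OF assms(2) \<open>0 < \<delta>\<close>] by blast
  show ?thesis
  proof (rule that[OF P])
    show "P \<noteq> {}" using bracket[of a] assms(2) by auto
    fix g x assume g: "mono_on {a..b} g" and close: "\<And>t. t \<in> P \<Longrightarrow> \<bar>g t - f t\<bar> < e"
      and x: "x \<in> {a..b}"
    obtain t1 t2 where t: "t1 \<in> P" "t2 \<in> P" "t1 \<le> x" "x \<le> t2" "t2 - t1 < \<delta>"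
      using bracket[OF x] by blast
    then have "\<bar>f t1 - f x\<bar> < e" "\<bar>f t2 - f x\<bar> < e"
      using \<delta> x P(2) by (auto simp: dist_real_def)
    moreover have "g t1 \<le> g x" "g x \<le> g t2"
      using mono_onD[OF g] t x P(2) by auto
    moreover have "\<bar>g t1 - f t1\<bar> < e" "\<bar>g t2 - f t2\<bar> < e" using close t by auto
    ultimately show "\<bar>f x - g x\<bar> \<le> 2 * e" by linarith
  qed
qed

lemma openin_compact_open_subbasic:
  "\<lbrakk>compactin X K; openin Y U\<rbrakk> \<Longrightarrow> openin (compact_open X Y) {f \<in> cmaps X Y. f ` K \<subseteq> U}"
  unfolding compact_open_def openin_topology_generated_by_iff
  by (rule generate_topology_on.Basis) blast

locale Gspace =
  fixes l1 l2 :: real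
  assumes l1_pos: "0 < l1" and l2_pos: "0 < l2"

sublocale Gspace \<subseteq> convex_metric "Gset l1 l2" "sup_dist l1" "affine_comb l1"
proof (intro convex_metric.intro convex_metric_axioms.intro)
  show "Metric_space (Gset l1 l2) (sup_dist l1)"
    using l1_pos by (intro Metric_space_Gset) simp
  show "affine_comb l1 w f g \<in> Gset l1 l2"
    if "w \<in> {0..1}" "f \<in> Gset l1 l2" "g \<in> Gset l1 l2" for w f g
    using that l1_pos l2_pos by (intro affine_comb_in_Gset) auto
  show "affine_comb l1 1 f g = f" if "f \<in> Gset l1 l2" for f g
    using that by (rule affine_comb_1)
  show "affine_comb l1 0 f g = g" if "g \<in> Gset l1 l2" for f g
    using that by (rule affine_comb_0)
  show "sup_dist l1 h (affine_comb l1 w f g) \<le> max (sup_dist l1 h f) (sup_dist l1 h g)"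
    if "w \<in> {0..1}" "h \<in> Gset l1 l2" "f \<in> Gset l1 l2" "g \<in> Gset l1 l2" for w h f g
    using that l1_pos by (intro sup_dist_affine_comb_le_max) auto
  show "sup_dist l1 (affine_comb l1 w f g) (affine_comb l1 v f g) \<le> \<bar>w - v\<bar> * sup_dist l1 f g"
    if "f \<in> Gset l1 l2" "g \<in> Gset l1 l2" for w v f g
    using that l1_pos by (intro sup_dist_affine_comb_affine_comb) auto
qed

context Gspace
begin

lemma sup_dist_le_from_samples:
  assumes "f \<in> Gset l1 l2" "0 < e"
  obtains P where "finite P" "P \<subseteq> {0..l1}" "P \<noteq> {}"
    "\<And>g. \<lbrakk>g \<in> Gset l1 l2; \<And>t. t \<in> P \<Longrightarrow> \<bar>g t - f t\<bar> < e\<rbrakk> \<Longrightarrow> sup_dist l1 f g \<le> 2 * e"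
proof -
  obtain P where P: "finite P" "P \<subseteq> {0..l1}" "P \<noteq> {}"
    and close: "\<And>g x. \<lbrakk>mono_on {0..l1} g; \<And>t. t \<in> P \<Longrightarrow> \<bar>g t - f t\<bar> < e; x \<in> {0..l1}\<rbrakk> \<Longrightarrow>
       \<bar>f x - g x\<bar> \<le> 2 * e"
    using uniform_bound_from_samples[OF Gset_continuous_on[OF assms(1)] l1_pos assms(2)] by blast
  show ?thesis
  proof (rule that[OF P])
    fix g assume "g \<in> Gset l1 l2" "\<And>t. t \<in> P \<Longrightarrow> \<bar>g t - f t\<bar> < e"
    then show "sup_dist l1 f g \<le> 2 * e"
      using assms(2) l1_pos close[OF Gset_mono_on] by (intro sup_dist_le) auto
  qed
qed

lemma openin_mtopology_subbasic:
  assumes K: "compactin (top_of_set {0..l1}) K" and U: "openin (top_of_set {0..l2}) U"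
  shows "openin mtopology
    ({f \<in> cmaps (top_of_set {0..l1}) (top_of_set {0..l2}). f ` K \<subseteq> U} \<inter> Gset l1 l2)"
  unfolding openin_mtopology
proof (intro conjI allI impI)
  fix f assume f: "f \<in> {f \<in> cmaps (top_of_set {0..l1}) (top_of_set {0..l2}). f ` K \<subseteq> U} \<inter> Gset l1 l2"
  have "compact K" "K \<subseteq> {0..l1}" using K by (auto simp: compactin_subtopology)
  obtain W where "open W" and UW: "U = {0..l2} \<inter> W" using U by (auto simp: openin_open)
  have "continuous_on K f"
    using Gset_continuous_on[of f] f \<open>K \<subseteq> {0..l1}\<close> continuous_on_subset by blast
  then have "compact (f ` K)" using \<open>compact K\<close> by (rule compact_continuous_image)
  moreover have "f ` K \<inter> - W = {}" using f UW by auto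
  ultimately obtain r where "0 < r" and r: "\<forall>y\<in>f ` K. \<forall>z\<in>- W. r \<le> dist y z"
    using separate_compact_closed closed_Compl[OF \<open>open W\<close>] by blast
  have "g \<in> {f \<in> cmaps (top_of_set {0..l1}) (top_of_set {0..l2}). f ` K \<subseteq> U} \<inter> Gset l1 l2"
    if g: "g \<in> mball f r" for g
  proof -
    have "g x \<in> W" if "x \<in> K" for x
    proof (rule ccontr)
      assume "g x \<notin> W"
      then have "r \<le> dist (f x) (g x)" using r that by blast
      moreover have "dist (f x) (g x) \<le> sup_dist l1 f g"
        using abs_le_sup_dist[of f l1 l2 g x] f g that \<open>K \<subseteq> {0..l1}\<close> by (auto simp: dist_real_def)
      ultimately show False using g by auto
    qed
    then show ?thesis
      using g UW Gset_in_range[of g] Gset_in_cmaps[of g] \<open>K \<subseteq> {0..l1}\<close> by auto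
  qed
  then show "\<exists>r>0. mball f r \<subseteq>
      {f \<in> cmaps (top_of_set {0..l1}) (top_of_set {0..l2}). f ` K \<subseteq> U} \<inter> Gset l1 l2"
    using \<open>0 < r\<close> by blast
qed auto

lemma openin_compact_open_imp_mtopology:
  assumes "openin (compact_open (top_of_set {0..l1}) (top_of_set {0..l2})) V"
  shows "openin mtopology (V \<inter> Gset l1 l2)"
proof -
  have "generate_topology_on {{f \<in> cmaps (top_of_set {0..l1}) (top_of_set {0..l2}). f ` K \<subseteq> U} |K U.
      compactin (top_of_set {0..l1}) K \<and> openin (top_of_set {0..l2}) U} V"
    using assms unfolding compact_open_def openin_topology_generated_by_iff .
  then show ?thesis
  proof induction
    case Empty
    show ?case by simp
  next
    case (Int a b)
    have "openin mtopology ((a \<inter> Gset l1 l2) \<inter> (b \<inter> Gset l1 l2))"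
      using Int.IH by (rule openin_Int)
    moreover have "(a \<inter> Gset l1 l2) \<inter> (b \<inter> Gset l1 l2) = a \<inter> b \<inter> Gset l1 l2" by blast
    ultimately show ?case by simp
  next
    case (UN \<V>)
    have "openin mtopology (\<Union>V\<in>\<V>. V \<inter> Gset l1 l2)"
      using UN.IH by (intro openin_Union) blast
    moreover have "(\<Union>V\<in>\<V>. V \<inter> Gset l1 l2) = \<Union>\<V> \<inter> Gset l1 l2" by blast
    ultimately show ?case by simp
  next
    case (Basis V)
    then show ?case using openin_mtopology_subbasic by blast
  qed
qed

lemma compact_open_nhood_in_mball:
  assumes "f \<in> Gset l1 l2" "0 < r"
  obtains V where "openin (compact_open (top_of_set {0..l1}) (top_of_set {0..l2})) V"
    "f \<in> V" "V \<inter> Gset l1 l2 \<subseteq> mball f r"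
proof -
  obtain P where P: "finite P" "P \<subseteq> {0..l1}" "P \<noteq> {}"
    and close: "\<And>g. \<lbrakk>g \<in> Gset l1 l2; \<And>t. t \<in> P \<Longrightarrow> \<bar>g t - f t\<bar> < r / 3\<rbrakk> \<Longrightarrow>
      sup_dist l1 f g \<le> 2 * (r / 3)"
    using sup_dist_le_from_samples[OF assms(1)] assms(2) by (metis divide_pos_pos zero_less_numeral)
  define B where "B t = {g \<in> cmaps (top_of_set {0..l1}) (top_of_set {0..l2}).
    g ` {t} \<subseteq> {0..l2} \<inter> ball (f t) (r / 3)}" for t
  have "openin (compact_open (top_of_set {0..l1}) (top_of_set {0..l2})) (B t)" if "t \<in> P" for t
    unfolding B_def using that P by (intro openin_compact_open_subbasic openin_open_Int) auto
  show ?thesis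
  proof
    show "openin (compact_open (top_of_set {0..l1}) (top_of_set {0..l2})) (\<Inter>t\<in>P. B t)"
      using P \<open>\<And>t. t \<in> P \<Longrightarrow> openin _ (B t)\<close> by (intro openin_Inter) auto
    show "f \<in> (\<Inter>t\<in>P. B t)"
      using P assms Gset_in_range[OF assms(1)] Gset_in_cmaps[OF assms(1)] by (auto simp: B_def)
    show "(\<Inter>t\<in>P. B t) \<inter> Gset l1 l2 \<subseteq> mball f r"
    proof
      fix g assume g: "g \<in> (\<Inter>t\<in>P. B t) \<inter> Gset l1 l2"
      then have "\<bar>g t - f t\<bar> < r / 3" if "t \<in> P" for t
        using that by (auto simp: B_def dist_real_def abs_minus_commute)
      then have "sup_dist l1 f g \<le> 2 * (r / 3)" using g close by blast
      then show "g \<in> mball f r" using g assms by auto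
    qed
  qed
qed

lemma subtopology_compact_open_eq_mtopology:
  "subtopology (compact_open (top_of_set {0..l1}) (top_of_set {0..l2})) (Gset l1 l2) = mtopology"
  unfolding topology_eq
proof (intro allI iffI)
  fix S assume "openin (subtopology (compact_open (top_of_set {0..l1}) (top_of_set {0..l2})) (Gset l1 l2)) S"
  then show "openin mtopology S"
    by (auto simp: openin_subtopology intro: openin_compact_open_imp_mtopology)
next
  fix S assume S: "openin mtopology S"
  show "openin (subtopology (compact_open (top_of_set {0..l1}) (top_of_set {0..l2})) (Gset l1 l2)) S"
    unfolding openin_subopen[of _ S]
  proof
    fix f assume "f \<in> S"
    then obtain r where "0 < r" "mball f r \<subseteq> S" "f \<in> Gset l1 l2"
      using S openin_mtopology by blast
    then obtain V where "openin (compact_open (top_of_set {0..l1}) (top_of_set {0..l2})) V"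
      "f \<in> V" "V \<inter> Gset l1 l2 \<subseteq> S"
      by (metis compact_open_nhood_in_mball order_trans)
    then show "\<exists>T. openin (subtopology (compact_open (top_of_set {0..l1}) (top_of_set {0..l2}))
        (Gset l1 l2)) T \<and> f \<in> T \<and> T \<subseteq> S"
      using \<open>f \<in> Gset l1 l2\<close> by (intro exI[of _ "V \<inter> Gset l1 l2"]) (auto simp: openin_subtopology_Int)
  qed
qed

lemma Gtop_eq_mtopology: "Gtop l1 l2 = mtopology"
proof -
  have "Gtop l1 l2 = delta_kelleyfication
      (subtopology (compact_open (top_of_set {0..l1}) (top_of_set {0..l2})) (Gset l1 l2))"
    unfolding Gtop_def TOP_def by (rule delta_kelleyfication_subtopology_delta_kelleyfication)
  then show ?thesis
    by (simp add: subtopology_compact_open_eq_mtopology delta_kelleyfication_mtopology)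
qed

lemma limitin_mtopology_if_pointwise:
  assumes \<phi>s: "\<And>n. \<phi>s n \<in> Gset l1 l2" and \<phi>: "\<phi> \<in> Gset l1 l2"
    and pointwise: "\<forall>t\<in>{0..l1}. (\<lambda>n. \<phi>s n t) \<longlonglongrightarrow> \<phi> t"
  shows "limitin mtopology \<phi>s \<phi> sequentially"
proof -
  have "\<forall>\<^sub>F n in sequentially. \<phi>s n \<in> Gset l1 l2 \<and> sup_dist l1 (\<phi>s n) \<phi> < e" if "0 < e" for e
  proof -
    obtain P where P: "finite P" "P \<subseteq> {0..l1}"
      and close: "\<And>g. \<lbrakk>g \<in> Gset l1 l2; \<And>t. t \<in> P \<Longrightarrow> \<bar>g t - \<phi> t\<bar> < e / 3\<rbrakk> \<Longrightarrow>
        sup_dist l1 \<phi> g \<le> 2 * (e / 3)"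
      using sup_dist_le_from_samples[OF \<phi>, of "e / 3"] \<open>0 < e\<close>
      by (metis divide_pos_pos zero_less_numeral)
    have "\<forall>\<^sub>F n in sequentially. dist (\<phi>s n t) (\<phi> t) < e / 3" if "t \<in> P" for t
    proof (rule tendstoD)
      show "(\<lambda>n. \<phi>s n t) \<longlonglongrightarrow> \<phi> t" using pointwise P(2) that by blast
    qed (use \<open>0 < e\<close> in simp)
    then have "\<forall>\<^sub>F n in sequentially. \<forall>t\<in>P. dist (\<phi>s n t) (\<phi> t) < e / 3"
      using P(1) by (intro eventually_ball_finite) auto
    then show ?thesis
    proof (rule eventually_mono)
      fix n assume "\<forall>t\<in>P. dist (\<phi>s n t) (\<phi> t) < e / 3"
      then have "sup_dist l1 \<phi> (\<phi>s n) \<le> 2 * (e / 3)"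
        by (intro close[OF \<phi>s]) (simp add: dist_real_def)
      then show "\<phi>s n \<in> Gset l1 l2 \<and> sup_dist l1 (\<phi>s n) \<phi> < e"
        using \<phi>s[of n] \<phi> \<open>0 < e\<close> commute[of "\<phi>s n" \<phi>] by linarith
    qed
  qed
  then show ?thesis
    using \<phi> by (simp add: limitin_metric)
qed

lemma limitin_mtopology_iff_pointwise:
  assumes \<phi>s: "\<And>n. \<phi>s n \<in> Gset l1 l2" and \<phi>: "\<phi> \<in> Gset l1 l2"
  shows "limitin mtopology \<phi>s \<phi> sequentially \<longleftrightarrow> (\<forall>t\<in>{0..l1}. (\<lambda>n. \<phi>s n t) \<longlonglongrightarrow> \<phi> t)"
proof
  assume "limitin mtopology \<phi>s \<phi> sequentially"
  then have uniform: "(\<lambda>n. sup_dist l1 (\<phi>s n) \<phi>) \<longlonglongrightarrow> 0"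
    by (simp add: limitin_metric_dist_null)
  show "\<forall>t\<in>{0..l1}. (\<lambda>n. \<phi>s n t) \<longlonglongrightarrow> \<phi> t"
  proof
    fix t assume t: "t \<in> {0..l1}"
    have "dist (\<phi>s n t) (\<phi> t) \<le> dist (sup_dist l1 (\<phi>s n) \<phi>) 0" for n
      using abs_le_sup_dist[OF \<phi>s \<phi> t] sup_dist_nonneg[of l1 "\<phi>s n" \<phi>] by (simp add: dist_real_def)
    then show "(\<lambda>n. \<phi>s n t) \<longlonglongrightarrow> \<phi> t"
      by (intro metric_tendsto_imp_tendsto[OF uniform] always_eventually allI)
  qed
qed (rule limitin_mtopology_if_pointwise[OF assms])

end

theorem proposition2p5:
  fixes l1 l2 :: real
  assumes "l1 > 0" and "l2 > 0"
  shows "Gtop l1 l2 = subtopology (compact_open (top_of_set {0..l1}) (top_of_set {0..l2})) (Gset l1 l2)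
     \<and> metrizable_space (Gtop l1 l2)
     \<and> (\<forall>(\<phi>s :: nat \<Rightarrow> real \<Rightarrow> real) \<phi>. (\<forall>n. \<phi>s n \<in> Gset l1 l2) \<longrightarrow> \<phi> \<in> Gset l1 l2 \<longrightarrow>
          (limitin (Gtop l1 l2) \<phi>s \<phi> sequentially \<longleftrightarrow>
           (\<forall>t \<in> {0..l1}. (\<lambda>n. \<phi>s n t) \<longlonglongrightarrow> \<phi> t)))"
proof -
  interpret Gspace l1 l2
    using assms by unfold_locales
  show ?thesis
    by (simp add: Gtop_eq_mtopology subtopology_compact_open_eq_mtopology
        metrizable_space_mtopology limitin_mtopology_iff_pointwise)
qed

end
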